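(* Let $\alpha,\beta\in\mathbb{R}^n_{>}$. Then $\alpha$-GSP has an efficient ex-post equilibrium on type space $\Theta^\beta$ if and only if $n\le 2$ or $k\le 1$; this holds even if $\alpha=\beta$.
   Context: Sponsored search setting: agents $N=\{1,\dots,n\}$, slots $1,\dots,k$ with $k\le n$; an outcome assigns agents to distinct positions, position $j\le k$ meaning slot $j$, others getting nothing (value 0); utilities quasilinear. $\mathbb{R}^n_{>}$: vectors $\alpha$ with $1=\alpha_1>\dots>\alpha_k>0$ and $\alpha_j=0$ for $j>k$. $\Theta^\beta$: type profiles in which each agent $i$ has a value $v_i(\theta_i)\ge0$ (all nonnegative values possible) and values slot $j$ at $\beta_j v_i(\theta_i)$. $\alpha$-GSP: each agent submits $b_i\ge0$ (bid $\alpha_j b_i$ on slot $j$ in GSP); agents are ranked by $b_i$ (ties arbitrary), the rank-$j$ agent ($j\le k$) gets slot $j$ and pays $\alpha_j$ times the $(j+1)$-st highest submitted value ($0$ if none). Incomplete information: a strategy of agent $i$ is a function $s_i$ from its types to submissions $b_i\ge0$. A strategy profile $s$ is an ex-post equilibrium on $\Theta^\beta$ if for every $\theta\in\Theta^\beta$ and every agent $i$, no other submission gives $i$ strictly higher utility against $s_{-i}(\theta_{-i})$; it is efficient if for every $\theta\in\Theta^\beta$ the resulting assignment maximizes total true value. *)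

theory Defs
  imports Main "HOL.Real"
begin

text \<open>Agents are 1..n, slots are 1..k, positions are 1..n (position j \<le> k is slot j).
  Vectors in R^n are functions nat \<Rightarrow> real, read on indices 1..n.\<close>

definition decr_vec :: "nat \<Rightarrow> nat \<Rightarrow> (nat \<Rightarrow> real) \<Rightarrow> bool" where
  "decr_vec n k a \<longleftrightarrow> a 1 = 1 \<and> (\<forall>j. 1 \<le> j \<and> j < k \<longrightarrow> a (Suc j) < a j) \<and> 0 < a k
      \<and> (\<forall>j. k < j \<and> j \<le> n \<longrightarrow> a j = 0)"

text \<open>A (deterministic) tie-breaking rule: maps each bid profile to a ranking of the agents
  (rank r = position r), consistent with the bids and depending only on the bids of agents 1..n.\<close>
definition valid_ranking_rule :: "nat \<Rightarrow> ((nat \<Rightarrow> real) \<Rightarrow> nat \<Rightarrow> nat) \<Rightarrow> bool" where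
  "valid_ranking_rule n rk \<longleftrightarrow>
     (\<forall>b. bij_betw (rk b) {1..n} {1..n}) \<and>
     (\<forall>b i j. i \<in> {1..n} \<and> j \<in> {1..n} \<and> b j < b i \<longrightarrow> rk b i < rk b j) \<and>
     (\<forall>b b'. (\<forall>i\<in>{1..n}. b i = b' i) \<longrightarrow> (\<forall>i\<in>{1..n}. rk b i = rk b' i))"

definition jth_highest :: "nat \<Rightarrow> (nat \<Rightarrow> real) \<Rightarrow> nat \<Rightarrow> real" where
  "jth_highest n b j = (if 1 \<le> j \<and> j \<le> n then rev (sort (map b [1..<Suc n])) ! (j - 1) else 0)"

definition gsp_utility :: "nat \<Rightarrow> nat \<Rightarrow> (nat \<Rightarrow> real) \<Rightarrow> (nat \<Rightarrow> real)
    \<Rightarrow> ((nat \<Rightarrow> real) \<Rightarrow> nat \<Rightarrow> nat) \<Rightarrow> (nat \<Rightarrow> real) \<Rightarrow> nat \<Rightarrow> real \<Rightarrow> real" where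
  "gsp_utility n k \<alpha> \<beta> rk b i x =
     (let r = rk b i in if r \<le> k then \<beta> r * x - \<alpha> r * jth_highest n b (Suc r) else 0)"

definition welfare :: "nat \<Rightarrow> nat \<Rightarrow> (nat \<Rightarrow> real) \<Rightarrow> (nat \<Rightarrow> nat) \<Rightarrow> (nat \<Rightarrow> real) \<Rightarrow> real" where
  "welfare n k \<beta> \<pi> v = (\<Sum>i\<in>{1..n}. if \<pi> i \<le> k then \<beta> (\<pi> i) * v i else 0)"

text \<open>Type profiles in Theta^beta are identified with value profiles v (v i \<ge> 0).\<close>
definition type_profile :: "nat \<Rightarrow> (nat \<Rightarrow> real) \<Rightarrow> bool" where
  "type_profile n v \<longleftrightarrow> (\<forall>i\<in>{1..n}. 0 \<le> v i)"

definition strategy_profile :: "nat \<Rightarrow> (nat \<Rightarrow> real \<Rightarrow> real) \<Rightarrow> bool" where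
  "strategy_profile n s \<longleftrightarrow> (\<forall>i\<in>{1..n}. \<forall>x. 0 \<le> x \<longrightarrow> 0 \<le> s i x)"

definition bids :: "(nat \<Rightarrow> real \<Rightarrow> real) \<Rightarrow> (nat \<Rightarrow> real) \<Rightarrow> nat \<Rightarrow> real" where
  "bids s v = (\<lambda>j. s j (v j))"

definition ex_post_equilibrium :: "nat \<Rightarrow> nat \<Rightarrow> (nat \<Rightarrow> real) \<Rightarrow> (nat \<Rightarrow> real)
    \<Rightarrow> ((nat \<Rightarrow> real) \<Rightarrow> nat \<Rightarrow> nat) \<Rightarrow> (nat \<Rightarrow> real \<Rightarrow> real) \<Rightarrow> bool" where
  "ex_post_equilibrium n k \<alpha> \<beta> rk s \<longleftrightarrow>
     (\<forall>v. type_profile n v \<longrightarrow> (\<forall>i\<in>{1..n}. \<forall>b'. 0 \<le> b' \<longrightarrow>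
        gsp_utility n k \<alpha> \<beta> rk ((bids s v)(i := b')) i (v i)
          \<le> gsp_utility n k \<alpha> \<beta> rk (bids s v) i (v i)))"

definition efficient :: "nat \<Rightarrow> nat \<Rightarrow> (nat \<Rightarrow> real)
    \<Rightarrow> ((nat \<Rightarrow> real) \<Rightarrow> nat \<Rightarrow> nat) \<Rightarrow> (nat \<Rightarrow> real \<Rightarrow> real) \<Rightarrow> bool" where
  "efficient n k \<beta> rk s \<longleftrightarrow>
     (\<forall>v. type_profile n v \<longrightarrow> (\<forall>\<pi>. bij_betw \<pi> {1..n} {1..n} \<longrightarrow>
        welfare n k \<beta> \<pi> v \<le> welfare n k \<beta> (rk (bids s v)) v))"

end

theory Submission
  imports Defs "HOL-Library.Multiset" "HOL-Combinatorics.Transposition"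
begin

text \<open>If k \<ge> 2 and n \<ge> 3, efficiency forces the agents p and q with the two highest values into
  slots 1 and 2. The runner-up q must not gain by jumping to slot 1, paying p's bid, and p must
  not gain by dropping to slot 2, which it can do whenever q outbids all other agents. Together
  these pin p's bid at value x down to (1 - \<beta> 2) x + \<alpha> 2 M, up to an error that vanishes as
  the value of q tends to x, where M is the highest bid among the remaining agents.
  But M depends on the values of these agents while the winner's bid does not, and M really does
  vary, because the lower bound makes every agent's bid unbounded in its value.

  For k = 1 the mechanism is the second-price auction, where truthful bidding is an efficient
  ex-post equilibrium; for n = k = 2 so is bidding (1 - \<beta> 2) times the value, which makes the
  winner pay exactly the loser's indifference price between the two slots.\<close>

lemma decr_vec_strict_mono:
  assumes "decr_vec n k a" "1 \<le> p" "p < q" "q \<le> k"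
  shows "a q < a p"
  using assms(3,4)
proof (induction q)
  case (Suc q)
  then have "a (Suc q) < a q" using assms(1,2) unfolding decr_vec_def by auto
  with Suc show ?case by (cases "p = q") auto
qed simp

lemma decr_vec_one: "decr_vec n k a \<Longrightarrow> a 1 = 1"
  unfolding decr_vec_def by simp

lemma decr_vec_pos:
  assumes "decr_vec n k a" "1 \<le> p" "p \<le> k"
  shows "0 < a p"
  using assms decr_vec_strict_mono[OF assms(1,2), of k] unfolding decr_vec_def
  by (cases "p = k") auto

context
  fixes n :: nat and rk :: "(nat \<Rightarrow> real) \<Rightarrow> nat \<Rightarrow> nat"
  assumes rk: "valid_ranking_rule n rk"
begin

lemma rank_bij: "bij_betw (rk b) {1..n} {1..n}"
  using conjunct1[OF rk[unfolded valid_ranking_rule_def]] by blast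

lemma rank_in_range: "i \<in> {1..n} \<Longrightarrow> rk b i \<in> {1..n}"
  using bij_betw_apply[OF rank_bij] .

lemma rank_inj: "i \<in> {1..n} \<Longrightarrow> j \<in> {1..n} \<Longrightarrow> rk b i = rk b j \<Longrightarrow> i = j"
  using inj_onD[OF bij_betw_imp_inj_on[OF rank_bij]] by blast

lemma rank_surj:
  assumes "r \<in> {1..n}"
  obtains i where "i \<in> {1..n}" "rk b i = r"
proof -
  have "r \<in> rk b ` {1..n}" using assms bij_betw_imp_surj_on[OF rank_bij] by simp
  then show ?thesis using that by blast
qed

lemma rank_less_if_bid_greater:
  "i \<in> {1..n} \<Longrightarrow> j \<in> {1..n} \<Longrightarrow> b j < b i \<Longrightarrow> rk b i < rk b j"
  using conjunct1[OF conjunct2[OF rk[unfolded valid_ranking_rule_def]]] by blast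

lemma bid_le_if_rank_le:
  "i \<in> {1..n} \<Longrightarrow> d \<in> {1..n} \<Longrightarrow> rk b i \<le> rk b d \<Longrightarrow> b d \<le> b i"
  using rank_less_if_bid_greater[of d i b] by linarith

lemma rank_eq_Suc_card_higher:
  assumes i: "i \<in> {1..n}" and distinct: "\<forall>d\<in>{1..n} - {i}. b d \<noteq> b i"
  shows "rk b i = Suc (card {d\<in>{1..n}. b i < b d})"
proof -
  define H where "H = {d\<in>{1..n}. b i < b d}"
  define L where "L = {d\<in>{1..n}. b d < b i}"
  have sub: "H \<subseteq> {1..n}" "L \<subseteq> {1..n}" by (auto simp: H_def L_def)
  have inj: "inj_on (rk b) A" if "A \<subseteq> {1..n}" for A
    using inj_on_subset[OF bij_betw_imp_inj_on[OF rank_bij] that] .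
  have "rk b ` H \<subseteq> {1..<rk b i}"
    using rank_less_if_bid_greater[OF _ i] rank_in_range by (auto simp: H_def)
  from card_inj_on_le[OF inj[OF sub(1)] this] have H_le: "card H \<le> rk b i - 1"
    by simp
  have "rk b ` L \<subseteq> {rk b i<..n}"
    using rank_less_if_bid_greater[OF i] rank_in_range by (auto simp: L_def)
  from card_inj_on_le[OF inj[OF sub(2)] this] have L_le: "card L \<le> n - rk b i"
    by simp
  have "d \<in> H \<union> L" if "d \<in> {1..n} - {i}" for d
  proof -
    have "b d \<noteq> b i" using distinct that by blast
    then have "b i < b d \<or> b d < b i" by linarith
    then show ?thesis using that unfolding H_def L_def by blast
  qed
  then have "{1..n} = insert i (H \<union> L)" using i sub by blast
  then have "n = card (insert i (H \<union> L))" by (metis card_atLeastAtMost diff_Suc_1)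
  also have "\<dots> = Suc (card H + card L)"
  proof -
    have "finite H" "finite L" using sub finite_subset by auto
    moreover have "H \<inter> L = {}" "i \<notin> H \<union> L" by (auto simp: H_def L_def)
    ultimately show ?thesis by (simp add: card_Un_disjoint)
  qed
  finally show ?thesis using H_le L_le rank_in_range[OF i, of b] unfolding H_def[symmetric] by auto
qed

lemma jth_highest_rank:
  assumes i: "i \<in> {1..n}"
  shows "jth_highest n b (rk b i) = b i"
proof -
  \<comment> \<open>Listing the bids in rank order yields the bid list sorted decreasingly.\<close>
  define \<sigma> where "\<sigma> = inv_into {1..n} (rk b)"
  define L where "L = map (b \<circ> \<sigma>) [1..<Suc n]"
  have \<sigma>: "bij_betw \<sigma> {1..n} {1..n}"
    unfolding \<sigma>_def by (rule bij_betw_inv_into[OF rank_bij])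
  have rank_\<sigma>: "rk b (\<sigma> r) = r" if "r \<in> {1..n}" for r
    using that bij_betw_imp_surj_on[OF rank_bij] unfolding \<sigma>_def by (simp add: f_inv_into_f)
  have "mset (map \<sigma> [1..<Suc n]) = mset [1..<Suc n]"
    using \<sigma> by (subst set_eq_iff_mset_eq_distinct[symmetric])
      (simp_all add: distinct_map bij_betw_def atLeastLessThanSuc_atLeastAtMost del: upt_Suc)
  then have "mset (rev L) = mset (map b [1..<Suc n])"
    unfolding L_def by (metis map_map mset_map mset_rev)
  moreover have "sorted (rev L)"
    unfolding sorted_rev_iff_nth_mono
  proof (intro allI impI)
    fix j j' assume jj': "j \<le> j'" "j' < length L"
    then have "Suc j \<in> {1..n}" "Suc j' \<in> {1..n}" by (simp_all add: L_def del: upt_Suc)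
    then show "L ! j' \<le> L ! j"
      using bid_le_if_rank_le[of "\<sigma> (Suc j)" "\<sigma> (Suc j')" b] rank_\<sigma> bij_betw_apply[OF \<sigma>] jj'
      by (simp add: L_def del: upt_Suc)
  qed
  ultimately have sorted_bids: "rev (sort (map b [1..<Suc n])) = L"
    using properties_for_sort by (metis rev_rev_ident)
  have r: "rk b i \<in> {1..n}" using rank_in_range[OF i] .
  then have "jth_highest n b (rk b i) = L ! (rk b i - 1)"
    unfolding jth_highest_def sorted_bids by simp
  also have "\<dots> = b (\<sigma> (rk b i))"
    using r by (cases "rk b i") (simp_all add: L_def del: upt_Suc)
  also have "\<sigma> (rk b i) = i"
    unfolding \<sigma>_def using inv_into_f_f[OF bij_betw_imp_inj_on[OF rank_bij] i] .
  finally show ?thesis .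
qed

lemma jth_highest_eq_Max:
  assumes r: "r \<in> {1..n}" and T: "\<forall>d\<in>{1..n}. rk b d < r \<longleftrightarrow> d \<in> T"
  shows "jth_highest n b r = Max (b ` ({1..n} - T))"
proof -
  obtain i where i: "i \<in> {1..n}" "rk b i = r" using rank_surj[OF r] .
  have "Max (b ` ({1..n} - T)) = b i"
  proof (rule Max_eqI)
    show "y \<le> b i" if "y \<in> b ` ({1..n} - T)" for y
      using that T i bid_le_if_rank_le[OF i(1)] by force
    show "b i \<in> b ` ({1..n} - T)" using T i by auto
  qed simp
  then show ?thesis using jth_highest_rank[OF i(1), of b] i(2) by simp
qed

lemma second_highest_eq_Max_others:
  assumes "i \<in> {1..n}" "rk b i = 1" "2 \<le> n"
  shows "jth_highest n b 2 = Max (b ` ({1..n} - {i}))"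
proof (rule jth_highest_eq_Max)
  have "rk b d < 2 \<longleftrightarrow> d \<in> {i}" if "d \<in> {1..n}" for d
    using assms rank_in_range[OF that, of b] rank_inj[OF that assms(1), of b] by auto
  then show "\<forall>d\<in>{1..n}. rk b d < 2 \<longleftrightarrow> d \<in> {i}" by blast
qed (use assms in simp)

lemma third_highest_eq_Max_others:
  assumes "p \<in> {1..n}" "q \<in> {1..n}" "rk b p = 1" "rk b q = 2" "3 \<le> n"
  shows "jth_highest n b 3 = Max (b ` ({1..n} - {p, q}))"
proof (rule jth_highest_eq_Max)
  have "rk b d < 3 \<longleftrightarrow> d \<in> {p, q}" if "d \<in> {1..n}" for d
    using assms rank_in_range[OF that, of b] rank_inj[OF that assms(1), of b]
      rank_inj[OF that assms(2), of b] by (cases "rk b d = 1"; cases "rk b d = 2") auto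
  then show "\<forall>d\<in>{1..n}. rk b d < 3 \<longleftrightarrow> d \<in> {p, q}" by blast
qed (use assms in simp)

end

lemma gsp_utility_at_rank:
  "rk b i = r \<Longrightarrow> r \<le> k \<Longrightarrow>
    gsp_utility n k \<alpha> \<beta> rk b i x = \<beta> r * x - \<alpha> r * jth_highest n b (Suc r)"
  by (simp add: gsp_utility_def)

lemma gsp_utility_rank_one:
  assumes "decr_vec n k \<alpha>" "decr_vec n k \<beta>" "1 \<le> k" "rk b i = 1"
  shows "gsp_utility n k \<alpha> \<beta> rk b i x = x - jth_highest n b 2"
  using assms decr_vec_one[of n k \<alpha>] decr_vec_one[of n k \<beta>] unfolding gsp_utility_def
  by (simp add: numeral_2_eq_2)

lemma welfare_transpose_gt:
  assumes \<beta>: "decr_vec n k \<beta>" and \<pi>: "bij_betw \<pi> {1..n} {1..n}"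
    and a: "a \<in> {1..n}" and t: "t \<in> {1..n}"
    and "\<pi> a < \<pi> t" "\<pi> a \<le> k" "v a < v t"
  shows "welfare n k \<beta> \<pi> v < welfare n k \<beta> (\<pi> \<circ> Transposition.transpose a t) v"
proof -
  define g where "g = (\<lambda>\<rho> i. if \<rho> i \<le> k then \<beta> (\<rho> i) * v i else 0)"
  define \<sigma> where "\<sigma> = \<pi> \<circ> Transposition.transpose a t"
  have "a \<noteq> t" using assms by auto
  have split: "welfare n k \<beta> \<rho> v = g \<rho> a + g \<rho> t + sum (g \<rho>) ({1..n} - {a} - {t})" for \<rho>
  proof -
    have "welfare n k \<beta> \<rho> v = g \<rho> a + sum (g \<rho>) ({1..n} - {a})"
      unfolding welfare_def g_def using a by (simp add: sum.remove)
    also have "sum (g \<rho>) ({1..n} - {a}) = g \<rho> t + sum (g \<rho>) ({1..n} - {a} - {t})"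
      using t \<open>a \<noteq> t\<close> by (simp add: sum.remove)
    finally show ?thesis by simp
  qed
  have rest: "sum (g \<sigma>) ({1..n} - {a} - {t}) = sum (g \<pi>) ({1..n} - {a} - {t})"
    by (rule sum.cong) (auto simp: g_def \<sigma>_def)
  have "1 \<le> \<pi> a" using bij_betw_apply[OF \<pi> a] by simp
  have "g \<pi> a + g \<pi> t < g \<sigma> a + g \<sigma> t"
  proof (cases "\<pi> t \<le> k")
    case True
    have "\<beta> (\<pi> t) < \<beta> (\<pi> a)" using decr_vec_strict_mono[OF \<beta> \<open>1 \<le> \<pi> a\<close>] assms True by simp
    then have "\<beta> (\<pi> t) * (v t - v a) < \<beta> (\<pi> a) * (v t - v a)"
      using assms by (intro mult_strict_right_mono) auto
    then show ?thesis using True assms \<open>a \<noteq> t\<close> by (simp add: g_def \<sigma>_def algebra_simps)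
  next
    case False
    have "\<beta> (\<pi> a) * v a < \<beta> (\<pi> a) * v t"
      using decr_vec_pos[OF \<beta> \<open>1 \<le> \<pi> a\<close>] assms by simp
    then show ?thesis using False assms \<open>a \<noteq> t\<close> by (simp add: g_def \<sigma>_def)
  qed
  then show ?thesis using split[of \<pi>] split[of \<sigma>] rest unfolding \<sigma>_def by linarith
qed

lemma welfare_maximal_value_order:
  assumes \<beta>: "decr_vec n k \<beta>" and \<pi>: "bij_betw \<pi> {1..n} {1..n}"
    and max: "\<And>\<sigma>. bij_betw \<sigma> {1..n} {1..n} \<Longrightarrow> welfare n k \<beta> \<sigma> v \<le> welfare n k \<beta> \<pi> v"
    and a: "a \<in> {1..n}" and t: "t \<in> {1..n}" and "\<pi> a < \<pi> t" "\<pi> a \<le> k"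
  shows "v t \<le> v a"
proof (rule ccontr)
  assume "\<not> v t \<le> v a"
  then have "welfare n k \<beta> \<pi> v < welfare n k \<beta> (\<pi> \<circ> Transposition.transpose a t) v"
    using welfare_transpose_gt[OF \<beta> \<pi> a t] assms by simp
  moreover have "bij_betw (\<pi> \<circ> Transposition.transpose a t) {1..n} {1..n}"
    by (rule bij_betw_trans[OF _ \<pi>]) (use a t in simp)
  ultimately show False using max by fastforce
qed

lemma welfare_maximal_top_two:
  assumes \<beta>: "decr_vec n k \<beta>" and "2 \<le> k" and \<pi>: "bij_betw \<pi> {1..n} {1..n}"
    and max: "\<And>\<sigma>. bij_betw \<sigma> {1..n} {1..n} \<Longrightarrow> welfare n k \<beta> \<sigma> v \<le> welfare n k \<beta> \<pi> v"
    and p: "p \<in> {1..n}" and q: "q \<in> {1..n}" and "v q < v p"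
    and others: "\<forall>d\<in>{1..n} - {p, q}. v d < v q"
  shows "\<pi> p = 1" and "\<pi> q = 2"
proof -
  have order: "v t \<le> v a" if "a \<in> {1..n}" "t \<in> {1..n}" "\<pi> a < \<pi> t" "\<pi> a \<le> k" for a t
    using welfare_maximal_value_order[OF \<beta> \<pi> max that] .
  have range: "\<pi> d \<in> {1..n}" if "d \<in> {1..n}" for d using bij_betw_apply[OF \<pi> that] .
  have "p \<noteq> q" using \<open>v q < v p\<close> by auto
  have "1 \<in> \<pi> ` {1..n}" "2 \<in> \<pi> ` {1..n}"
    using bij_betw_imp_surj_on[OF \<pi>] p q \<open>p \<noteq> q\<close> by auto
  then obtain a a' where a: "a \<in> {1..n}" "\<pi> a = 1" and a': "a' \<in> {1..n}" "\<pi> a' = 2"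
    by (metis imageE)
  show "\<pi> p = 1"
  proof (rule ccontr)
    assume "\<pi> p \<noteq> 1"
    then have "v p \<le> v a" using order[OF a(1) p] a range[OF p] \<open>2 \<le> k\<close> by auto
    moreover have "a \<noteq> p" using a \<open>\<pi> p \<noteq> 1\<close> by auto
    then have "v a < v p"
    proof (cases "a = q")
      case False
      then have "v a < v q" using others a \<open>a \<noteq> p\<close> by auto
      then show ?thesis using \<open>v q < v p\<close> by simp
    qed (use \<open>v q < v p\<close> in simp)
    ultimately show False by simp
  qed
  show "\<pi> q = 2"
  proof (rule ccontr)
    assume "\<pi> q \<noteq> 2"
    have "a' \<noteq> p" "a' \<noteq> q" using a' \<open>\<pi> p = 1\<close> \<open>\<pi> q \<noteq> 2\<close> by auto
    have "\<pi> q \<noteq> 1"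
      using inj_onD[OF bij_betw_imp_inj_on[OF \<pi>], of q p] p q \<open>\<pi> p = 1\<close> \<open>p \<noteq> q\<close> by auto
    then have "v q \<le> v a'"
      using order[OF a'(1) q] a' range[OF q] \<open>\<pi> q \<noteq> 2\<close> \<open>2 \<le> k\<close> by auto
    moreover have "v a' < v q" using others a' \<open>a' \<noteq> p\<close> \<open>a' \<noteq> q\<close> by auto
    ultimately show False by simp
  qed
qed

lemma third_agent_exists:
  assumes "3 \<le> n"
  obtains d :: nat where "d \<in> {1..n} - {p, q}"
proof -
  have "\<exists>d\<in>{1::nat, 2, 3}. d \<notin> {p, q}" by auto
  then obtain d :: nat where "d \<in> {1, 2, 3}" "d \<notin> {p, q}" by blast
  then have "d \<in> {1..n} - {p, q}" using assms by auto
  then show ?thesis by (rule that)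
qed

context
  fixes n k :: nat and \<alpha> \<beta> :: "nat \<Rightarrow> real" and rk :: "(nat \<Rightarrow> real) \<Rightarrow> nat \<Rightarrow> nat"
    and s :: "nat \<Rightarrow> real \<Rightarrow> real"
  assumes rk: "valid_ranking_rule n rk" and \<alpha>: "decr_vec n k \<alpha>" and \<beta>: "decr_vec n k \<beta>"
    and s: "strategy_profile n s"
    and equilibrium: "ex_post_equilibrium n k \<alpha> \<beta> rk s" and efficient: "efficient n k \<beta> rk s"
    and k: "2 \<le> k" and n: "3 \<le> n"
begin

lemma bids_nonneg: "type_profile n v \<Longrightarrow> d \<in> {1..n} \<Longrightarrow> 0 \<le> bids s v d"
  using s unfolding strategy_profile_def type_profile_def bids_def by blast

lemma Max_other_bids_nonneg:
  assumes "type_profile n v"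
  shows "0 \<le> Max (bids s v ` ({1..n} - {p, q}))"
proof -
  obtain d where d: "d \<in> {1..n} - {p, q}" using third_agent_exists[OF n] .
  then have "bids s v d \<le> Max (bids s v ` ({1..n} - {p, q}))" by (intro Max_ge) auto
  moreover have "0 \<le> bids s v d" using bids_nonneg[OF assms] d by blast
  ultimately show ?thesis by linarith
qed

lemma no_profitable_deviation:
  "type_profile n v \<Longrightarrow> i \<in> {1..n} \<Longrightarrow> 0 \<le> c \<Longrightarrow>
    gsp_utility n k \<alpha> \<beta> rk ((bids s v)(i := c)) i (v i) \<le> gsp_utility n k \<alpha> \<beta> rk (bids s v) i (v i)"
  using equilibrium unfolding ex_post_equilibrium_def by blast

lemma ranks_top_two:
  assumes "type_profile n v" "p \<in> {1..n}" "q \<in> {1..n}" "v q < v p"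
    and "\<forall>d\<in>{1..n} - {p, q}. v d < v q"
  shows "rk (bids s v) p = 1" and "rk (bids s v) q = 2"
  using welfare_maximal_top_two[OF \<beta> k rank_bij[OF rk] _ assms(2-)] efficient assms(1)
  unfolding efficient_def by blast+

text \<open>The runner-up may always jump to the top slot, paying the winner's bid.\<close>
lemma winner_bid_lower_bound:
  assumes v: "type_profile n v" and p: "p \<in> {1..n}" and q: "q \<in> {1..n}" and "v q < v p"
    and others: "\<forall>d\<in>{1..n} - {p, q}. v d < v q"
  shows "(1 - \<beta> 2) * v q + \<alpha> 2 * Max (bids s v ` ({1..n} - {p, q})) \<le> s p (v p)"
proof -
  let ?b = "bids s v"
  define b' where "b' = ?b(q := ?b p + 1)"
  have "p \<noteq> q" using \<open>v q < v p\<close> by auto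
  have rp: "rk ?b p = 1" and rq: "rk ?b q = 2" using ranks_top_two[OF assms] by auto
  have top: "?b d \<le> ?b p" if "d \<in> {1..n}" for d
    using bid_le_if_rank_le[OF rk p that] rank_in_range[OF rk that] rp by simp
  have higher: "b' d < b' q" if "d \<in> {1..n} - {q}" for d
    using top[of d] that by (simp add: b'_def)
  then have "rk b' q = Suc (card {d\<in>{1..n}. b' q < b' d})"
    by (intro rank_eq_Suc_card_higher[OF rk q]) (metis less_irrefl)
  also have "{d\<in>{1..n}. b' q < b' d} = {}" using higher by (auto dest: less_asym)
  finally have r'q: "rk b' q = 1" by simp
  have "jth_highest n b' 2 = Max (b' ` ({1..n} - {q}))"
    using second_highest_eq_Max_others[OF rk q r'q] n by simp
  also have "\<dots> = ?b p"
    using top p \<open>p \<noteq> q\<close> by (intro Max_eqI) (auto simp: b'_def)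
  finally have "gsp_utility n k \<alpha> \<beta> rk b' q (v q) = v q - ?b p"
    using gsp_utility_rank_one[where rk=rk, OF \<alpha> \<beta> _ r'q] k by simp
  moreover have "gsp_utility n k \<alpha> \<beta> rk ?b q (v q)
      = \<beta> 2 * v q - \<alpha> 2 * Max (?b ` ({1..n} - {p, q}))"
    using gsp_utility_at_rank[where rk=rk and b="?b" and i=q, OF rq k] third_highest_eq_Max_others[OF rk p q rp rq n]
    by (simp add: numeral_3_eq_3)
  moreover have "0 \<le> ?b p + 1" using bids_nonneg[OF v p] by simp
  ultimately show ?thesis
    using no_profitable_deviation[OF v q] unfolding b'_def by (force simp: bids_def algebra_simps)
qed

text \<open>The winner may always drop to the second slot by bidding strictly between the
  runner-up's bid and all lower bids.\<close>
lemma runner_up_bid_upper_bound: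
  assumes v: "type_profile n v" and p: "p \<in> {1..n}" and q: "q \<in> {1..n}" and "v q < v p"
    and others: "\<forall>d\<in>{1..n} - {p, q}. v d < v q"
    and gap: "Max (bids s v ` ({1..n} - {p, q})) < s q (v q)"
  shows "s q (v q) \<le> (1 - \<beta> 2) * v p + \<alpha> 2 * Max (bids s v ` ({1..n} - {p, q}))"
proof -
  let ?b = "bids s v"
  define M where "M = Max (?b ` ({1..n} - {p, q}))"
  define c where "c = (M + ?b q) / 2"
  define b' where "b' = ?b(p := c)"
  have "p \<noteq> q" using \<open>v q < v p\<close> by auto
  have rp: "rk ?b p = 1" and rq: "rk ?b q = 2" using ranks_top_two[OF assms(1-5)] by auto
  have below_M: "?b d \<le> M" if "d \<in> {1..n} - {p, q}" for d
    using that unfolding M_def by (intro Max_ge) auto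
  have "0 \<le> M" unfolding M_def using Max_other_bids_nonneg[OF v] .
  have c: "M < c" "c < ?b q" "0 \<le> c"
    using gap \<open>0 \<le> M\<close> unfolding M_def c_def bids_def by auto
  have b'_others: "b' d < c" if "d \<in> {1..n} - {p, q}" for d
    using below_M[OF that] c that by (simp add: b'_def)
  have b'_p: "b' p = c" and b'_q: "b' q = ?b q" using \<open>p \<noteq> q\<close> by (simp_all add: b'_def)
  have q_highest: "b' d < b' q" if "d \<in> {1..n} - {q}" for d
    using b'_others[of d] b'_p b'_q c that by (cases "d = p") auto
  then have "rk b' q = Suc (card {d\<in>{1..n}. b' q < b' d})"
    by (intro rank_eq_Suc_card_higher[OF rk q]) (metis less_irrefl)
  also have "{d\<in>{1..n}. b' q < b' d} = {}" using q_highest by (auto dest: less_asym)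
  finally have r'q: "rk b' q = 1" by simp
  have p_between: "b' d < b' p \<or> d = q" if "d \<in> {1..n} - {p}" for d
    using b'_others[of d] b'_p that by auto
  then have "rk b' p = Suc (card {d\<in>{1..n}. b' p < b' d})"
    using b'_p b'_q c by (intro rank_eq_Suc_card_higher[OF rk p]) (metis less_irrefl)
  also have "{d\<in>{1..n}. b' p < b' d} = {q}"
  proof (intro equalityI subsetI)
    fix d assume d: "d \<in> {d\<in>{1..n}. b' p < b' d}"
    then have "d \<noteq> p" by auto
    then show "d \<in> {q}" using p_between[of d] d by (auto dest: less_asym)
  qed (use q b'_p b'_q c in simp)
  finally have r'p: "rk b' p = 2" by simp
  have "jth_highest n b' 3 = Max (b' ` ({1..n} - {q, p}))"
    using third_highest_eq_Max_others[OF rk q p r'q r'p n] .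
  also have "b' ` ({1..n} - {q, p}) = ?b ` ({1..n} - {p, q})"
    unfolding b'_def by auto
  finally have "jth_highest n b' 3 = M" unfolding M_def .
  then have "gsp_utility n k \<alpha> \<beta> rk b' p (v p) = \<beta> 2 * v p - \<alpha> 2 * M"
    using gsp_utility_at_rank[where rk=rk and b=b' and i=p, OF r'p k] by (simp add: numeral_3_eq_3)
  moreover have "gsp_utility n k \<alpha> \<beta> rk ?b p (v p) = v p - ?b q"
    using gsp_utility_rank_one[where rk=rk, OF \<alpha> \<beta> _ rp] k jth_highest_rank[OF rk q, of ?b] rq by simp
  ultimately show ?thesis
    using no_profitable_deviation[OF v p c(3)] unfolding b'_def M_def by (simp add: bids_def algebra_simps)
qed

lemma shading_factor_pos: "0 < 1 - \<beta> 2"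
  using decr_vec_strict_mono[OF \<beta>, of 1 2] decr_vec_one[OF \<beta>] k by simp

lemma bid_unbounded:
  assumes p: "p \<in> {1..n}"
  obtains w where "0 < w" "X < s p w"
proof -
  obtain q where q: "q \<in> {1..n} - {p, p}" using third_agent_exists[OF n] .
  define w where "w = 2 * (\<bar>X\<bar> + 1) / (1 - \<beta> 2)"
  define v where "v = (\<lambda>_. 0 :: real)(p := w, q := w / 2)"
  have "0 < w" using shading_factor_pos unfolding w_def by simp
  then have "type_profile n v" unfolding type_profile_def v_def by simp
  then have "(1 - \<beta> 2) * (w / 2) + \<alpha> 2 * Max (bids s v ` ({1..n} - {p, q})) \<le> s p w"
    using winner_bid_lower_bound[of v p q] p q \<open>0 < w\<close> by (simp add: v_def)
  moreover have "0 \<le> \<alpha> 2 * Max (bids s v ` ({1..n} - {p, q}))"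
    using Max_other_bids_nonneg[OF \<open>type_profile n v\<close>] decr_vec_pos[OF \<alpha>, of 2] k by simp
  moreover have "(1 - \<beta> 2) * (w / 2) = \<bar>X\<bar> + 1"
    using shading_factor_pos unfolding w_def by (simp add: field_simps)
  ultimately have "X < s p w" by linarith
  with \<open>0 < w\<close> show ?thesis by (rule that)
qed

lemma no_efficient_equilibrium: False
proof -
  define \<gamma> where "\<gamma> = 1 - \<beta> 2"
  have "0 < \<gamma>" "0 < \<alpha> 2"
    using shading_factor_pos decr_vec_pos[OF \<alpha>, of 2] k unfolding \<gamma>_def by auto
  define Oth where "Oth = {1..n} - {1, 2}"
  define u0 :: "nat \<Rightarrow> real" where "u0 = (\<lambda>_. 0)"
  define Xlo where "Xlo = Max (bids s u0 ` Oth)"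
  have "3 \<in> {1..n}" using n by simp
  then obtain w where "0 < w" "Xlo < s 3 w" by (rule bid_unbounded)
  define u3 where "u3 = u0(3 := w)"
  define Xhi where "Xhi = Max (bids s u3 ` Oth)"
  have "s 3 w \<le> Xhi"
    unfolding Xhi_def Oth_def using n by (intro Max_ge) (auto simp: bids_def image_iff u3_def)
  then have "Xlo < Xhi" using \<open>Xlo < s 3 w\<close> by simp
  have "0 \<le> Xlo"
    using Max_other_bids_nonneg[of u0] unfolding Xlo_def Oth_def type_profile_def u0_def by simp
  define y where "y = w + Xlo / \<gamma> + 1"
  define \<delta> where "\<delta> = \<alpha> 2 * (Xhi - Xlo) / (4 * \<gamma>)"
  have "0 < \<delta>" using \<open>0 < \<gamma>\<close> \<open>0 < \<alpha> 2\<close> \<open>Xlo < Xhi\<close> unfolding \<delta>_def by simp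
  have "w < y" using divide_nonneg_pos[OF \<open>0 \<le> Xlo\<close> \<open>0 < \<gamma>\<close>] unfolding y_def by simp
  have "\<gamma> * y = \<gamma> * w + Xlo + \<gamma>" using \<open>0 < \<gamma>\<close> unfolding y_def by (simp add: field_simps)
  then have "Xlo < \<gamma> * y" using mult_pos_pos[OF \<open>0 < \<gamma>\<close> \<open>0 < w\<close>] \<open>0 < \<gamma>\<close> by linarith
  define v where "v = u3(1 := y + \<delta>, 2 := y)"
  define v' where "v' = u0(1 := y + \<delta>, 2 := y + 2 * \<delta>)"
  have profiles: "type_profile n v" "type_profile n v'"
    using \<open>0 < w\<close> \<open>w < y\<close> \<open>0 < \<delta>\<close>
    unfolding type_profile_def v_def v'_def u3_def u0_def by auto
  have "bids s v ` ({1..n} - {1, 2}) = bids s u3 ` Oth"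
    "bids s v' ` ({1..n} - {2, 1}) = bids s u0 ` Oth"
    unfolding v_def v'_def Oth_def bids_def by (auto simp: insert_commute)
  moreover have "\<forall>d\<in>{1..n} - {1, 2}. v d < v 2" "\<forall>d\<in>{1..n} - {2, 1}. v' d < v' 1"
    using \<open>0 < w\<close> \<open>w < y\<close> \<open>0 < \<delta>\<close> unfolding v_def v'_def u3_def u0_def by auto
  moreover have "1 \<in> {1..n}" "2 \<in> {1..n}" using n by auto
  ultimately have lower: "\<gamma> * y + \<alpha> 2 * Xhi \<le> s 1 (y + \<delta>)"
    and upper: "Xlo < s 1 (y + \<delta>) \<Longrightarrow> s 1 (y + \<delta>) \<le> \<gamma> * (y + 2 * \<delta>) + \<alpha> 2 * Xlo"
    using winner_bid_lower_bound[OF profiles(1), of 1 2] \<open>0 < \<delta>\<close>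
      runner_up_bid_upper_bound[OF profiles(2), of 2 1]
    unfolding \<gamma>_def Xhi_def Xlo_def by (simp_all add: v_def v'_def)
  have "0 \<le> \<alpha> 2 * Xhi" using \<open>0 < \<alpha> 2\<close> \<open>0 \<le> Xlo\<close> \<open>Xlo < Xhi\<close> by simp
  then have "Xlo < s 1 (y + \<delta>)" using lower \<open>Xlo < \<gamma> * y\<close> by linarith
  then have "\<alpha> 2 * (Xhi - Xlo) \<le> 2 * \<gamma> * \<delta>"
    using lower upper by (simp add: algebra_simps)
  also have "\<dots> = \<alpha> 2 * (Xhi - Xlo) / 2" using \<open>0 < \<gamma>\<close> unfolding \<delta>_def by simp
  finally show False using \<open>0 < \<alpha> 2\<close> \<open>Xlo < Xhi\<close> by simp
qed

end

lemma single_slot_utility: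
  assumes rk: "valid_ranking_rule n rk" and "decr_vec n 1 \<alpha>" "decr_vec n 1 \<beta>" "i \<in> {1..n}"
  shows "gsp_utility n 1 \<alpha> \<beta> rk c i x = (if rk c i = 1 then x - jth_highest n c 2 else 0)"
proof (cases "rk c i = 1")
  case True
  then show ?thesis using gsp_utility_rank_one[where rk=rk, OF assms(2,3) _ True] by simp
next
  case False
  then have "\<not> rk c i \<le> 1" using rank_in_range[OF rk assms(4), of c] by simp
  then show ?thesis using False unfolding gsp_utility_def by simp
qed

lemma single_slot_welfare:
  assumes "decr_vec n 1 \<beta>" "bij_betw \<pi> {1..n} {1..n}" "a \<in> {1..n}" "\<pi> a = 1"
  shows "welfare n 1 \<beta> \<pi> v = v a"
proof -
  have "\<beta> 1 = 1" using decr_vec_one[OF assms(1)] .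
  have "(if \<pi> i \<le> 1 then \<beta> (\<pi> i) * v i else 0) = (if i = a then v i else 0)"
    if "i \<in> {1..n}" for i
  proof -
    have "\<pi> i = 1 \<longleftrightarrow> i = a"
      using inj_onD[OF bij_betw_imp_inj_on[OF assms(2)], of i a] that assms(3,4) by auto
    moreover have "1 \<le> \<pi> i" using bij_betw_apply[OF assms(2) that] by simp
    ultimately show ?thesis using \<open>\<beta> 1 = 1\<close> by auto
  qed
  then have "welfare n 1 \<beta> \<pi> v = (\<Sum>i\<in>{1..n}. if i = a then v i else 0)"
    unfolding welfare_def by (rule sum.cong[OF refl])
  then show ?thesis using assms(3) by simp
qed

lemma truthful_single_slot_efficient:
  assumes rk: "valid_ranking_rule n rk" and \<beta>: "decr_vec n 1 \<beta>" and "1 \<le> n"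
  shows "efficient n 1 \<beta> rk (\<lambda>i x. x)"
  unfolding efficient_def
proof (intro allI impI)
  fix v and \<pi> :: "nat \<Rightarrow> nat" assume \<pi>: "bij_betw \<pi> {1..n} {1..n}"
  have "1 \<in> \<pi> ` {1..n}" using bij_betw_imp_surj_on[OF \<pi>] \<open>1 \<le> n\<close> by simp
  then obtain a where a: "a \<in> {1..n}" "\<pi> a = 1" by (metis imageE)
  obtain t where t: "t \<in> {1..n}" "rk v t = 1" using rank_surj[OF rk] \<open>1 \<le> n\<close> by auto
  have "welfare n 1 \<beta> \<pi> v = v a" using single_slot_welfare[OF \<beta> \<pi> a] .
  also have "v a \<le> v t"
    using bid_le_if_rank_le[OF rk t(1) a(1), of v] t(2) rank_in_range[OF rk a(1), of v] by simp
  also have "v t = welfare n 1 \<beta> (rk v) v"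
    using single_slot_welfare[OF \<beta> rank_bij[OF rk] t] by simp
  finally show "welfare n 1 \<beta> \<pi> v \<le> welfare n 1 \<beta> (rk (bids (\<lambda>i x. x) v)) v"
    by (simp add: bids_def)
qed

text \<open>The winner pays the highest other bid P, so truthful bidding yields max (v i - P) 0,
  the best any bid can yield.\<close>
lemma truthful_single_slot_equilibrium:
  assumes rk: "valid_ranking_rule n rk" and \<alpha>: "decr_vec n 1 \<alpha>" and \<beta>: "decr_vec n 1 \<beta>"
  shows "ex_post_equilibrium n 1 \<alpha> \<beta> rk (\<lambda>i x. x)"
  unfolding ex_post_equilibrium_def
proof (intro allI impI ballI)
  fix v i and c :: real assume i: "i \<in> {1..n}"
  let ?U = "\<lambda>b. gsp_utility n 1 \<alpha> \<beta> rk b i (v i)"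
  have U: "?U b = (if rk b i = 1 then v i - jth_highest n b 2 else 0)" for b
    using single_slot_utility[OF rk \<alpha> \<beta> i] .
  have "?U (v(i := c)) \<le> ?U v"
  proof (cases "n = 1")
    case True
    then show ?thesis using U rank_in_range[OF rk i] unfolding jth_highest_def by simp
  next
    case False
    define P where "P = Max (v ` ({1..n} - {i}))"
    have "2 \<le> n" using False i by simp
    then have nonempty: "(if i = 1 then 2 else 1) \<in> {1..n} - {i}" using i by auto
    have price: "jth_highest n b 2 = P" if "rk b i = 1" "\<forall>d\<in>{1..n} - {i}. b d = v d" for b
    proof -
      have "b ` ({1..n} - {i}) = v ` ({1..n} - {i})" using that(2) by (intro image_cong) simp_all
      then show ?thesis
        using second_highest_eq_Max_others[OF rk i that(1) \<open>2 \<le> n\<close>] unfolding P_def by simp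
    qed
    have "?U (v(i := c)) \<le> max (v i - P) 0" using U price by simp
    also have "max (v i - P) 0 \<le> ?U v"
    proof (cases "rk v i = 1")
      case True
      have "v d \<le> v i" if "d \<in> {1..n}" for d
        using bid_le_if_rank_le[OF rk i that, of v] True rank_in_range[OF rk that, of v] by simp
      then have "P \<le> v i" unfolding P_def using nonempty by (intro Max.boundedI) auto
      then show ?thesis using U price True by simp
    next
      case False
      have "1 \<in> {1..n}" using i by simp
      then obtain a where a: "a \<in> {1..n}" "rk v a = 1" by (rule rank_surj[OF rk])
      have "v i \<le> v a"
        using bid_le_if_rank_le[OF rk a(1) i, of v] a rank_in_range[OF rk i, of v] by simp
      also have "v a \<le> P" unfolding P_def using a False by (intro Max_ge) auto
      finally show ?thesis using U False by simp
    qed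
    finally show ?thesis .
  qed
  then show "?U ((bids (\<lambda>i x. x) v)(i := c)) \<le> ?U (bids (\<lambda>i x. x) v)"
    by (simp add: bids_def)
qed

lemma bij_two_elements:
  fixes \<pi> :: "nat \<Rightarrow> nat"
  assumes "bij_betw \<pi> {1..2::nat} {1..2}" "i \<in> {1..2}" "j \<in> {1..2}" "i \<noteq> j"
  shows "\<pi> i = 1 \<and> \<pi> j = 2 \<or> \<pi> i = 2 \<and> \<pi> j = 1"
proof -
  have two: "{1..2::nat} = {1, 2}" by auto
  have "\<pi> i \<noteq> \<pi> j"
    using assms inj_onD[OF bij_betw_imp_inj_on[OF assms(1)], of i j] by auto
  moreover have "\<pi> i \<in> {1, 2}" "\<pi> j \<in> {1, 2}"
    using bij_betw_apply[OF assms(1)] assms(2,3) unfolding two by auto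
  ultimately show ?thesis by auto
qed

lemma two_slots_welfare:
  assumes "bij_betw \<pi> {1..2::nat} {1..2}" "decr_vec 2 2 \<beta>"
  shows "welfare 2 2 \<beta> \<pi> v = (if \<pi> 1 = 1 then v 1 + \<beta> 2 * v 2 else \<beta> 2 * v 1 + v 2)"
proof -
  have "{1..2::nat} = {1, 2}" by auto
  moreover have "\<beta> 1 = 1" using decr_vec_one[OF assms(2)] .
  ultimately show ?thesis using bij_two_elements[OF assms(1), of 1 2] unfolding welfare_def by auto
qed

lemma shaded_two_agents_equilibrium:
  assumes rk: "valid_ranking_rule 2 rk" and \<alpha>: "decr_vec 2 2 \<alpha>" and \<beta>: "decr_vec 2 2 \<beta>"
  shows "ex_post_equilibrium 2 2 \<alpha> \<beta> rk (\<lambda>i x. (1 - \<beta> 2) * x)"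
  unfolding ex_post_equilibrium_def
proof (intro allI impI ballI)
  fix v i and c :: real assume i: "i \<in> {1..2::nat}"
  define \<gamma> where "\<gamma> = 1 - \<beta> 2"
  let ?b = "bids (\<lambda>i x. \<gamma> * x) v"
  let ?U = "\<lambda>b. gsp_utility 2 2 \<alpha> \<beta> rk b i (v i)"
  have "\<exists>j\<in>{1..2::nat}. j \<noteq> i" by (rule bexI[of _ "if i = 1 then 2 else 1"]) auto
  then obtain j where j: "j \<in> {1..2}" "j \<noteq> i" by blast
  have ranks: "rk b i = 1 \<and> rk b j = 2 \<or> rk b i = 2 \<and> rk b j = 1" for b
    using bij_two_elements[OF rank_bij[OF rk] i j(1)] j(2) by simp
  have U: "?U b = (if rk b i = 1 then v i - b j else \<beta> 2 * v i)" for b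
  proof (cases "rk b i = 1")
    case True
    then show ?thesis
      using gsp_utility_rank_one[where rk=rk, OF \<alpha> \<beta> _ True] jth_highest_rank[OF rk j(1), of b]
        ranks[of b] by simp
  next
    case False
    moreover have "jth_highest 2 b 3 = 0" unfolding jth_highest_def by simp
    ultimately show ?thesis
      using gsp_utility_at_rank[where rk=rk and b=b and i=i, OF _ order.refl] ranks[of b] by simp
  qed
  have "?U (?b(i := c)) \<le> max (v i - \<gamma> * v j) (\<beta> 2 * v i)"
    using U j(2) by (simp add: bids_def)
  also have "\<dots> \<le> ?U ?b"
  proof (cases "rk ?b i = 1")
    case True
    then have "?b j \<le> ?b i" using bid_le_if_rank_le[OF rk i j(1)] ranks[of ?b] by simp
    then show ?thesis using U True unfolding \<gamma>_def by (simp add: bids_def algebra_simps)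
  next
    case False
    then have "?b i \<le> ?b j" using bid_le_if_rank_le[OF rk j(1) i] ranks[of ?b] by simp
    then show ?thesis using U False unfolding \<gamma>_def by (simp add: bids_def algebra_simps)
  qed
  finally show "?U (?b(i := c)) \<le> ?U ?b" unfolding \<gamma>_def .
qed

lemma shaded_two_agents_efficient:
  assumes rk: "valid_ranking_rule 2 rk" and \<beta>: "decr_vec 2 2 \<beta>"
  shows "efficient 2 2 \<beta> rk (\<lambda>i x. (1 - \<beta> 2) * x)"
  unfolding efficient_def
proof (intro allI impI)
  fix v and \<pi> :: "nat \<Rightarrow> nat" assume \<pi>: "bij_betw \<pi> {1..2} {1..2}"
  let ?b = "bids (\<lambda>i x. (1 - \<beta> 2) * x) v"
  have ranks: "rk ?b 1 = 1 \<and> rk ?b 2 = 2 \<or> rk ?b 1 = 2 \<and> rk ?b 2 = 1"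
    using bij_two_elements[OF rank_bij[OF rk], of 1 2] by simp
  have "welfare 2 2 \<beta> \<pi> v \<le> max (v 1 + \<beta> 2 * v 2) (\<beta> 2 * v 1 + v 2)"
    using two_slots_welfare[OF \<pi> \<beta>] by simp
  also have "\<dots> = welfare 2 2 \<beta> (rk ?b) v"
  proof (cases "rk ?b 1 = 1")
    case True
    then have "?b 2 \<le> ?b 1" using bid_le_if_rank_le[OF rk, of 1 2] ranks by simp
    then show ?thesis
      using two_slots_welfare[OF rank_bij[OF rk] \<beta>] True by (simp add: bids_def algebra_simps)
  next
    case False
    then have "?b 1 \<le> ?b 2" using bid_le_if_rank_le[OF rk, of 2 1] ranks by simp
    then show ?thesis
      using two_slots_welfare[OF rank_bij[OF rk] \<beta>] False by (simp add: bids_def algebra_simps)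
  qed
  finally show "welfare 2 2 \<beta> \<pi> v \<le> welfare 2 2 \<beta> (rk ?b) v" .
qed

lemma efficient_equilibrium_single_slot:
  assumes "valid_ranking_rule n rk" "decr_vec n 1 \<alpha>" "decr_vec n 1 \<beta>" "1 \<le> n"
  shows "\<exists>s. strategy_profile n s \<and> ex_post_equilibrium n 1 \<alpha> \<beta> rk s \<and> efficient n 1 \<beta> rk s"
  using truthful_single_slot_equilibrium[OF assms(1-3)] truthful_single_slot_efficient[OF assms(1,3,4)]
  by (intro exI[of _ "\<lambda>i x. x"]) (simp add: strategy_profile_def)

lemma efficient_equilibrium_two_agents:
  assumes "valid_ranking_rule 2 rk" "decr_vec 2 2 \<alpha>" "decr_vec 2 2 \<beta>"
  shows "\<exists>s. strategy_profile 2 s \<and> ex_post_equilibrium 2 2 \<alpha> \<beta> rk s \<and> efficient 2 2 \<beta> rk s"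
proof -
  have "\<beta> 2 < 1" using decr_vec_strict_mono[OF assms(3), of 1 2] decr_vec_one[OF assms(3)] by simp
  then show ?thesis
    using shaded_two_agents_equilibrium[OF assms] shaded_two_agents_efficient[OF assms(1,3)]
    by (intro exI[of _ "\<lambda>i x. (1 - \<beta> 2) * x"]) (simp add: strategy_profile_def)
qed

theorem theorem6:
  fixes n k :: nat and \<alpha> \<beta> :: "nat \<Rightarrow> real" and rk :: "(nat \<Rightarrow> real) \<Rightarrow> nat \<Rightarrow> nat"
  assumes "1 \<le> k" and "k \<le> n"
    and "decr_vec n k \<alpha>" and "decr_vec n k \<beta>"
    and "valid_ranking_rule n rk"
  shows "(\<exists>s. strategy_profile n s \<and> ex_post_equilibrium n k \<alpha> \<beta> rk s \<and> efficient n k \<beta> rk s)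
         \<longleftrightarrow> (n \<le> 2 \<or> k \<le> 1)"
proof
  assume "\<exists>s. strategy_profile n s \<and> ex_post_equilibrium n k \<alpha> \<beta> rk s \<and> efficient n k \<beta> rk s"
  then obtain s where s: "strategy_profile n s" "ex_post_equilibrium n k \<alpha> \<beta> rk s"
    "efficient n k \<beta> rk s" by blast
  show "n \<le> 2 \<or> k \<le> 1"
  proof (rule ccontr)
    assume "\<not> (n \<le> 2 \<or> k \<le> 1)"
    then have "2 \<le> k" "3 \<le> n" by auto
    then show False by (rule no_efficient_equilibrium[OF assms(5,3,4) s])
  qed
next
  assume "n \<le> 2 \<or> k \<le> 1"
  then consider "k = 1" | "n = 2" "k = 2" using assms(1,2) by linarith
  then show "\<exists>s. strategy_profile n s \<and> ex_post_equilibrium n k \<alpha> \<beta> rk s \<and> efficient n k \<beta> rk s"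
  proof cases
    case 1
    then show ?thesis using efficient_equilibrium_single_slot[OF assms(5)] assms(2-4) by simp
  next
    case 2
    then show ?thesis using efficient_equilibrium_two_agents[of rk \<alpha> \<beta>] assms(3-5) by simp
  qed
qed

end
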